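(* Fix real parameters $\ell>0$, $\ell_0\in(0,\ell)$, $\rho>0$, $I_\rho>0$, $EI>0$, $K>0$, $m>0$, $\varkappa>0$, $d>0$. Let $s\in\mathbb{C}$ be such that $K+I_\rho s^2\neq 0$, $b\neq 0$, $a^2\neq b$ (with $a,b$ as in the context), and such that the $4\times 4$ matrix $M=M(s)$ defined in the context is invertible; write $M^{-1}=(M^{-1}_{ij})_{i,j=1}^4$. Let $U\in\mathbb{C}$. Suppose $W,\Psi:[0,\ell]\to\mathbb{C}$ are such that their restrictions to $[0,\ell_0]$ and to $[\ell_0,\ell]$ are twice continuously differentiable (derivatives at $\ell_0$ understood one-sidedly, denoted by arguments $\ell_0-0$ and $\ell_0+0$), and they satisfy on $(0,\ell_0)$ and on $(\ell_0,\ell)$ $$K\big(W''(x)-\Psi'(x)\big)-\rho s^2 W(x)=0,\qquad EI\,\Psi''(x)+K\big(W'(x)-\Psi(x)\big)-I_\rho s^2\Psi(x)=0,$$ together with the boundary conditions $W(0)=W(\ell)=0$, $\Psi'(0)=\Psi'(\ell)=0$ and the interface conditions $$W(\ell_0-0)=W(\ell_0+0),\quad \Psi(\ell_0-0)=\Psi(\ell_0+0),\quad \Psi'(\ell_0-0)=\Psi'(\ell_0+0),$$ $$K\big(W'(\ell_0-0)-W'(\ell_0+0)\big)+(ms^2+\varkappa+ds)\,W(\ell_0)=U.$$ Then for every $\ell_k\in[0,\ell]$ one has $W(\ell_k)=H_1(s)\,U$ and $\Psi'(\ell_k)=H_2(s)\,U$, where $$H_1(s)=\begin{cases}\frac1K\Big(z_2(\ell_k,s)M^{-1}_{14}+z_4(\ell_k,s)M^{-1}_{24}\Big),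 & \ell_k\in[0,\ell_0],\\[4pt] \frac1K\Big(z_2(\ell_k-\ell,s)M^{-1}_{34}+z_4(\ell_k-\ell,s)M^{-1}_{44}\Big), & \ell_k\in(\ell_0,\ell],\end{cases}$$ $$H_2(s)=\begin{cases}\frac1{K^2}\Big[\big(-\lambda_1^2\lambda_2^2K z_4(\ell_k,s)-\rho s^2 z_2(\ell_k,s)\big)M^{-1}_{14}+\big(Kz_5(\ell_k,s)-\rho s^2 z_4(\ell_k,s)\big)M^{-1}_{24}\Big], & \ell_k\in[0,\ell_0],\\[4pt] \frac1{K^2}\Big[\big(-\lambda_1^2\lambda_2^2K z_4(\ell_k-\ell,s)-\rho s^2 z_2(\ell_k-\ell,s)\big)M^{-1}_{34}+\big(Kz_5(\ell_k-\ell,s)-\rho s^2 z_4(\ell_k-\ell,s)\big)M^{-1}_{44}\Big], & \ell_k\in(\ell_0,\ell].\end{cases}$$ In other words, $H_1$ and $H_2$ are the transfer functions of the damped Timoshenko beam with attached mass (input: the force $F_0$ at $\ell_0$; outputs: the displacement $w(\ell_k,t)$, resp. the mechanical curvature $\psi'(\ell_k,t)$).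
   Context: This is the Laplace transform (zero initial data, Laplace variable $s$) of the simply supported Timoshenko beam system $\rho\ddot w-K(w''-\psi')=0$, $I_\rho\ddot\psi-EI\psi''-K(w'-\psi)=0$ on $[0,\ell]$, with $w(0,t)=w(\ell,t)=0$, $\psi'(0,t)=\psi'(\ell,t)=0$, continuity of $w,\psi,\psi'$ at $\ell_0$, and $F_0-m\ddot w(\ell_0,t)-\varkappa w(\ell_0,t)-d\dot w(\ell_0,t)-K(w'(\ell_0-0,t)-w'(\ell_0+0,t))=0$; here $W,\Psi,U$ are the Laplace transforms of $w,\psi,F_0$. Parameters: $\rho$ linear density, $I_\rho$ mass moment of inertia of the cross-section, $EI$ bending stiffness, $K=kGA$ shear stiffness, $m$ attached mass, $\varkappa$ spring stiffness, $d$ damping coefficient. Primes denote derivatives in $x$. Notation: $a=\frac{s^2}{2}\big(\frac{\rho}{K}+\frac{I_\rho}{EI}\big)$, $b=\frac{(K+I_\rho s^2)\rho s^2}{K\,EI}$, $\lambda_1=\sqrt{a+\sqrt{a^2-b}}$, $\lambda_2=\sqrt{a-\sqrt{a^2-b}}$ (principal square roots), so that $\lambda_1^2\lambda_2^2=b$. For $x\in\mathbb{R}$: $z_1(x,s)=\lambda_1^2\cosh\lambda_2x-\lambda_2^2\cosh\lambda_1x$, $z_2(x,s)=\frac{1}{\lambda_1\lambda_2}(\lambda_1^3\sinh\lambda_2x-\lambda_2^3\sinh\lambda_1x)$, $z_3(x,s)=\cosh\lambda_1x-\cosh\lambda_2x$, $z_4(x,s)=\frac{1}{\lambda_1\lambda_2}(\lambda_2\sinh\lambda_1x-\lambda_1\sinh\lambda_2x)$,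 $z_5(x,s)=\lambda_1\sinh\lambda_1x-\lambda_2\sinh\lambda_2x$, $z_6(x,s)=\lambda_1^2\cosh\lambda_1x-\lambda_2^2\cosh\lambda_2x$. Further $v=\frac{K}{EI}-\frac{\rho s^2}{K}$, $v_1=\frac{\rho s^2}{K}$, $v_2=\frac{ms^2+ds+\varkappa}{K}$, and writing $z_j^0=z_j(\ell_0,s)$, $z_j^-=z_j(\ell_0-\ell,s)$, $\beta=\lambda_1^2\lambda_2^2$, the matrix $M$ has rows Row 1: $\big(z_2^0,\; z_4^0,\; -z_2^-,\; -z_4^-\big)$; Row 2: $\big(vz_1^0-\beta z_3^0,\; vz_3^0+z_6^0,\; \beta z_3^- - vz_1^-,\; -z_6^- - vz_3^-\big)$; Row 3: $\big(v_1z_2^0+\beta z_4^0,\; v_1z_4^0-z_5^0,\; -\beta z_4^- - v_1z_2^-,\; z_5^- - v_1z_4^-\big)$; Row 4: $\big(z_1^0+v_2z_2^0,\; z_3^0+v_2z_4^0,\; -z_1^-,\; -z_3^-\big)$. *)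

theory Defs
  imports "HOL-Analysis.Analysis"
begin

definition a_coef :: "real \<Rightarrow> real \<Rightarrow> real \<Rightarrow> real \<Rightarrow> complex \<Rightarrow> complex" where
  "a_coef rho Irho EI K s = s\<^sup>2 / 2 * of_real (rho / K + Irho / EI)"

definition b_coef :: "real \<Rightarrow> real \<Rightarrow> real \<Rightarrow> real \<Rightarrow> complex \<Rightarrow> complex" where
  "b_coef rho Irho EI K s =
     (of_real K + of_real Irho * s\<^sup>2) * of_real rho * s\<^sup>2 / (of_real K * of_real EI)"

definition lam1 :: "real \<Rightarrow> real \<Rightarrow> real \<Rightarrow> real \<Rightarrow> complex \<Rightarrow> complex" where
  "lam1 rho Irho EI K s =
     csqrt (a_coef rho Irho EI K s
            + csqrt ((a_coef rho Irho EI K s)\<^sup>2 - b_coef rho Irho EI K s))"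

definition lam2 :: "real \<Rightarrow> real \<Rightarrow> real \<Rightarrow> real \<Rightarrow> complex \<Rightarrow> complex" where
  "lam2 rho Irho EI K s =
     csqrt (a_coef rho Irho EI K s
            - csqrt ((a_coef rho Irho EI K s)\<^sup>2 - b_coef rho Irho EI K s))"

definition z1 :: "complex \<Rightarrow> complex \<Rightarrow> real \<Rightarrow> complex" where
  "z1 l1 l2 x = l1\<^sup>2 * cosh (l2 * of_real x) - l2\<^sup>2 * cosh (l1 * of_real x)"

definition z2 :: "complex \<Rightarrow> complex \<Rightarrow> real \<Rightarrow> complex" where
  "z2 l1 l2 x = (l1 ^ 3 * sinh (l2 * of_real x) - l2 ^ 3 * sinh (l1 * of_real x)) / (l1 * l2)"

definition z3 :: "complex \<Rightarrow> complex \<Rightarrow> real \<Rightarrow> complex" where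
  "z3 l1 l2 x = cosh (l1 * of_real x) - cosh (l2 * of_real x)"

definition z4 :: "complex \<Rightarrow> complex \<Rightarrow> real \<Rightarrow> complex" where
  "z4 l1 l2 x = (l2 * sinh (l1 * of_real x) - l1 * sinh (l2 * of_real x)) / (l1 * l2)"

definition z5 :: "complex \<Rightarrow> complex \<Rightarrow> real \<Rightarrow> complex" where
  "z5 l1 l2 x = l1 * sinh (l1 * of_real x) - l2 * sinh (l2 * of_real x)"

definition z6 :: "complex \<Rightarrow> complex \<Rightarrow> real \<Rightarrow> complex" where
  "z6 l1 l2 x = l1\<^sup>2 * cosh (l1 * of_real x) - l2\<^sup>2 * cosh (l2 * of_real x)"

definition Mmat ::
  "real \<Rightarrow> real \<Rightarrow> real \<Rightarrow> real \<Rightarrow> real \<Rightarrow> real \<Rightarrow> real \<Rightarrow> real \<Rightarrow> real \<Rightarrow> complex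
   \<Rightarrow> complex^4^4" where
  "Mmat rho Irho EI K m kappa d l l0 s =
    (let L1 = lam1 rho Irho EI K s; L2 = lam2 rho Irho EI K s;
         \<beta> = L1\<^sup>2 * L2\<^sup>2;
         v = of_real (K / EI) - of_real rho * s\<^sup>2 / of_real K;
         v1 = of_real rho * s\<^sup>2 / of_real K;
         v2 = (of_real m * s\<^sup>2 + of_real d * s + of_real kappa) / of_real K;
         z1o = z1 L1 L2 l0; z2o = z2 L1 L2 l0; z3o = z3 L1 L2 l0;
         z4o = z4 L1 L2 l0; z5o = z5 L1 L2 l0; z6o = z6 L1 L2 l0;
         z1m = z1 L1 L2 (l0 - l); z2m = z2 L1 L2 (l0 - l); z3m = z3 L1 L2 (l0 - l);
         z4m = z4 L1 L2 (l0 - l); z5m = z5 L1 L2 (l0 - l); z6m = z6 L1 L2 (l0 - l)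
     in vector [
          vector [z2o, z4o, - z2m, - z4m],
          vector [v * z1o - \<beta> * z3o, v * z3o + z6o, \<beta> * z3m - v * z1m, - z6m - v * z3m],
          vector [v1 * z2o + \<beta> * z4o, v1 * z4o - z5o, - \<beta> * z4m - v1 * z2m, z5m - v1 * z4m],
          vector [z1o + v2 * z2o, z3o + v2 * z4o, - z1m, - z3m]])"

definition H1 ::
  "real \<Rightarrow> real \<Rightarrow> real \<Rightarrow> real \<Rightarrow> real \<Rightarrow> real \<Rightarrow> real \<Rightarrow> real \<Rightarrow> real \<Rightarrow> real
   \<Rightarrow> complex \<Rightarrow> complex" where
  "H1 rho Irho EI K m kappa d l l0 lk s =
    (let L1 = lam1 rho Irho EI K s; L2 = lam2 rho Irho EI K s;
         Mi = matrix_inv (Mmat rho Irho EI K m kappa d l l0 s)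
     in if lk \<le> l0
        then (z2 L1 L2 lk * Mi $ 1 $ 4 + z4 L1 L2 lk * Mi $ 2 $ 4) / of_real K
        else (z2 L1 L2 (lk - l) * Mi $ 3 $ 4 + z4 L1 L2 (lk - l) * Mi $ 4 $ 4) / of_real K)"

definition H2 ::
  "real \<Rightarrow> real \<Rightarrow> real \<Rightarrow> real \<Rightarrow> real \<Rightarrow> real \<Rightarrow> real \<Rightarrow> real \<Rightarrow> real \<Rightarrow> real
   \<Rightarrow> complex \<Rightarrow> complex" where
  "H2 rho Irho EI K m kappa d l l0 lk s =
    (let L1 = lam1 rho Irho EI K s; L2 = lam2 rho Irho EI K s;
         Mi = matrix_inv (Mmat rho Irho EI K m kappa d l l0 s);
         x = (if lk \<le> l0 then lk else lk - l);
         c1 = (if lk \<le> l0 then Mi $ 1 $ 4 else Mi $ 3 $ 4);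
         c2 = (if lk \<le> l0 then Mi $ 2 $ 4 else Mi $ 4 $ 4)
     in ((- (L1\<^sup>2 * L2\<^sup>2) * of_real K * z4 L1 L2 x - of_real rho * s\<^sup>2 * z2 L1 L2 x) * c1
         + (of_real K * z5 L1 L2 x - of_real rho * s\<^sup>2 * z4 L1 L2 x) * c2)
        / (of_real K)\<^sup>2)"

lemma vector4_nth:
  "(vector [x1, x2, x3, x4] :: ('a::zero)^4) $ 1 = x1"
  "(vector [x1, x2, x3, x4] :: ('a::zero)^4) $ 2 = x2"
  "(vector [x1, x2, x3, x4] :: ('a::zero)^4) $ 3 = x3"
  "(vector [x1, x2, x3, x4] :: ('a::zero)^4) $ 4 = x4"
  unfolding vector_def by simp_all

end

theory Submission
  imports Defs
begin

text \<open>On each of the segments [0, l0] and [l0, l] the beam equations form a first-order linear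
  system with constant coefficients for (W, W', c Psi, Psi'), where c = (K + Irho s^2) / EI.
  The functions z_j are built from cosh and sinh of lambda_1 x, lambda_2 x, the roots of the
  characteristic polynomial, so every combination A z_2 + B z_4 yields a solution vanishing in
  W and Psi' at x = 0; an energy estimate (Groenwall) shows that all solutions with W = Psi' = 0
  at the outer end x0 of a segment are of this form, shifted by x0.  The three interface
  conditions and the force balance at l0 then say exactly that M maps K (A1, B1, A3, B3) to
  (0, 0, 0, U), so the coefficients are U / K times the last column of M^-1.\<close>

lemma nonneg_vanishes_if_deriv_bounded:
  fixes e e' :: "real \<Rightarrow> real" and k a b x :: real
  assumes nonneg: "\<And>t. e t \<ge> 0"
    and cont: "continuous_on {a..b} e"
    and deriv: "\<And>t. t \<in> {a<..<b} \<Longrightarrow> (e has_real_derivative e' t) (at t)"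
    and bound: "\<And>t. t \<in> {a<..<b} \<Longrightarrow> \<bar>e' t\<bar> \<le> k * e t"
    and endpoint: "e a = 0 \<or> e b = 0"
    and x: "x \<in> {a..b}"
  shows "e x = 0"
proof -
  have weighted_deriv: "((\<lambda>t. exp (\<sigma> * t) * e t) has_real_derivative
      exp (\<sigma> * t) * (\<sigma> * e t + e' t)) (at t)" if "t \<in> {a<..<b}" for \<sigma> t
    by (rule derivative_eq_intros refl deriv[OF that] | simp add: algebra_simps)+
  have weighted_cont: "continuous_on {u..v} (\<lambda>t. exp (\<sigma> * t) * e t)"
    if "{u..v} \<subseteq> {a..b}" for \<sigma> u v
    by (intro continuous_intros continuous_on_subset[OF cont that])
  have "exp (- k * x) * e x \<le> exp (- k * a) * e a"
  proof (rule DERIV_nonpos_imp_decreasing_open[where f = "\<lambda>t. exp (- k * t) * e t"])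
    fix t assume "a < t" "t < x"
    then have t: "t \<in> {a<..<b}" using x by auto
    have "- k * e t + e' t \<le> 0" using bound[OF t] by linarith
    then show "\<exists>y. ((\<lambda>t. exp (- k * t) * e t) has_real_derivative y) (at t) \<and> y \<le> 0"
      using weighted_deriv[OF t, of "- k"] mult_nonneg_nonpos[of "exp (- k * t)"] by auto
  qed (use x in \<open>auto intro: weighted_cont[of a x "- k", simplified]\<close>)
  moreover have "exp (k * x) * e x \<le> exp (k * b) * e b"
  proof (rule DERIV_nonneg_imp_increasing_open[where f = "\<lambda>t. exp (k * t) * e t"])
    fix t assume "x < t" "t < b"
    then have t: "t \<in> {a<..<b}" using x by auto
    have "k * e t + e' t \<ge> 0" using bound[OF t] by linarith
    then show "\<exists>y. ((\<lambda>t. exp (k * t) * e t) has_real_derivative y) (at t) \<and> y \<ge> 0"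
      using weighted_deriv[OF t, of k] by auto
  qed (use x in \<open>auto intro: weighted_cont[of x b k]\<close>)
  ultimately have "exp (- k * x) * e x \<le> 0 \<or> exp (k * x) * e x \<le> 0"
    using endpoint by auto
  then show ?thesis
    using nonneg[of x] by (auto simp: mult_le_0_iff)
qed

lemma linear_ode_vanishes_if_vanishes_at_endpoint:
  fixes y :: "real \<Rightarrow> 'a::real_inner" and f :: "'a \<Rightarrow> 'a"
  assumes f: "bounded_linear f"
    and cont: "continuous_on {a..b} y"
    and deriv: "\<And>t. t \<in> {a<..<b} \<Longrightarrow> (y has_vector_derivative f (y t)) (at t)"
    and endpoint: "y a = 0 \<or> y b = 0"
    and x: "x \<in> {a..b}"
  shows "y x = 0"
proof -
  obtain C where C: "\<And>z. norm (f z) \<le> norm z * C"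
    using bounded_linear.pos_bounded[OF f] by blast
  have "y x \<bullet> y x = 0"
  proof (rule nonneg_vanishes_if_deriv_bounded[where e = "\<lambda>t. y t \<bullet> y t"
        and e' = "\<lambda>t. 2 * (y t \<bullet> f (y t))" and k = "2 * C"])
    fix t assume t: "t \<in> {a<..<b}"
    have "((\<lambda>t. y t \<bullet> y t) has_vector_derivative y t \<bullet> f (y t) + f (y t) \<bullet> y t) (at t)"
      using bounded_bilinear.has_vector_derivative[OF bounded_bilinear_inner deriv[OF t] deriv[OF t]] .
    moreover have "y t \<bullet> f (y t) + f (y t) \<bullet> y t = 2 * (y t \<bullet> f (y t))"
      by (simp add: inner_commute)
    ultimately show "((\<lambda>t. y t \<bullet> y t) has_real_derivative 2 * (y t \<bullet> f (y t))) (at t)"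
      by (simp add: has_real_derivative_iff_has_vector_derivative)
    have "\<bar>y t \<bullet> f (y t)\<bar> \<le> norm (y t) * (norm (y t) * C)"
      using Cauchy_Schwarz_ineq2 C by (metis mult_left_mono norm_ge_zero order_trans)
    then show "\<bar>2 * (y t \<bullet> f (y t))\<bar> \<le> 2 * C * (y t \<bullet> y t)"
      by (simp add: power2_norm_eq_inner[symmetric] power2_eq_square algebra_simps)
  next
    show "continuous_on {a..b} (\<lambda>t. y t \<bullet> y t)"
      by (rule continuous_on_inner[OF cont cont])
  qed (use endpoint x in auto)
  then show ?thesis by simp
qed

lemma has_vector_derivative_sinh_shifted:
  fixes L :: complex
  shows "((\<lambda>x::real. sinh (L * of_real (x - x0))) has_vector_derivative
           L * cosh (L * of_real (x - x0))) (at x within S)"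
proof -
  have "((\<lambda>w. sinh (L * (w - of_real x0))) has_field_derivative
          cosh (L * (of_real x - of_real x0)) * L) (at (of_real x))"
    by (auto intro!: derivative_eq_intros)
  from has_vector_derivative_real_field[OF this, of S] show ?thesis
    by (simp add: mult.commute)
qed

lemma has_vector_derivative_cosh_shifted:
  fixes L :: complex
  shows "((\<lambda>x::real. cosh (L * of_real (x - x0))) has_vector_derivative
           L * sinh (L * of_real (x - x0))) (at x within S)"
proof -
  have "((\<lambda>w. cosh (L * (w - of_real x0))) has_field_derivative
          sinh (L * (of_real x - of_real x0)) * L) (at (of_real x))"
    by (auto intro!: derivative_eq_intros)
  from has_vector_derivative_real_field[OF this, of S] show ?thesis
    by (simp add: mult.commute)
qed

lemmas hyperbolic_vector_derivative_rules =
  has_vector_derivative_sinh_shifted has_vector_derivative_cosh_shifted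
  has_vector_derivative_diff has_vector_derivative_mult_right has_vector_derivative_divide

lemma has_vector_derivative_z3:
  "((\<lambda>x. z3 L1 L2 (x - x0)) has_vector_derivative z5 L1 L2 (x - x0)) (at x within S)"
  unfolding z3_def z5_def
  by (rule has_vector_derivative_eq_rhs, (rule hyperbolic_vector_derivative_rules)+)
     (simp add: algebra_simps)

lemma has_vector_derivative_z5:
  "((\<lambda>x. z5 L1 L2 (x - x0)) has_vector_derivative z6 L1 L2 (x - x0)) (at x within S)"
  unfolding z5_def z6_def
  by (rule has_vector_derivative_eq_rhs, (rule hyperbolic_vector_derivative_rules)+)
     (simp add: algebra_simps power2_eq_square)

context
  fixes L1 L2 :: complex
  assumes L1: "L1 \<noteq> 0" and L2: "L2 \<noteq> 0"
begin

lemma has_vector_derivative_z1: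
  "((\<lambda>x. z1 L1 L2 (x - x0)) has_vector_derivative - (L1\<^sup>2 * L2\<^sup>2) * z4 L1 L2 (x - x0)) (at x within S)"
  unfolding z1_def z4_def
  by (rule has_vector_derivative_eq_rhs, (rule hyperbolic_vector_derivative_rules)+)
     (use L1 L2 in \<open>simp add: field_simps power2_eq_square\<close>)

lemma has_vector_derivative_z2:
  "((\<lambda>x. z2 L1 L2 (x - x0)) has_vector_derivative z1 L1 L2 (x - x0)) (at x within S)"
  unfolding z1_def z2_def
  by (rule has_vector_derivative_eq_rhs, (rule hyperbolic_vector_derivative_rules)+)
     (use L1 L2 in \<open>simp add: field_simps power2_eq_square power3_eq_cube\<close>)

lemma has_vector_derivative_z4:
  "((\<lambda>x. z4 L1 L2 (x - x0)) has_vector_derivative z3 L1 L2 (x - x0)) (at x within S)"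
  unfolding z3_def z4_def
  by (rule has_vector_derivative_eq_rhs, (rule hyperbolic_vector_derivative_rules)+)
     (use L1 L2 in \<open>simp add: field_simps\<close>)

lemma has_vector_derivative_z6:
  "((\<lambda>x. z6 L1 L2 (x - x0)) has_vector_derivative
     (L1\<^sup>2 + L2\<^sup>2) * z5 L1 L2 (x - x0) - L1\<^sup>2 * L2\<^sup>2 * z4 L1 L2 (x - x0)) (at x within S)"
  unfolding z4_def z5_def z6_def
  by (rule has_vector_derivative_eq_rhs, (rule hyperbolic_vector_derivative_rules)+)
     (use L1 L2 in \<open>simp add: field_simps power2_eq_square\<close>)

lemma z5_eq_z2_z4: "z5 L1 L2 x = z2 L1 L2 x + (L1\<^sup>2 + L2\<^sup>2) * z4 L1 L2 x"
  unfolding z2_def z4_def z5_def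
  using L1 L2 by (simp add: field_simps power2_eq_square power3_eq_cube)

end

lemma z_at_0:
  "z1 L1 L2 0 = L1\<^sup>2 - L2\<^sup>2" "z2 L1 L2 0 = 0" "z3 L1 L2 0 = 0"
  "z4 L1 L2 0 = 0" "z5 L1 L2 0 = 0" "z6 L1 L2 0 = L1\<^sup>2 - L2\<^sup>2"
  by (simp_all add: z1_def z2_def z3_def z4_def z5_def z6_def)

text \<open>The state is (W, W', c Psi, Psi') with c = (K + Irho s^2) / EI, v1 = rho s^2 / K and
  k = K / EI; scaling Psi by c keeps the field free of divisions.\<close>

type_synonym beam_state = "complex \<times> complex \<times> complex \<times> complex"

definition beam_field :: "complex \<Rightarrow> complex \<Rightarrow> complex \<Rightarrow> beam_state \<Rightarrow> beam_state" where
  "beam_field v1 c k = (\<lambda>(w, w1, q, p). (w1, p + v1 * w, c * p, q - k * w1))"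

text \<open>For W = A z_2 + B z_4 the last two entries are c Psi = W''' + (k - v1) W' and
  Psi' = W'' - v1 W; they are the combinations occurring in the rows of M.\<close>

definition beam_profile ::
  "complex \<Rightarrow> complex \<Rightarrow> complex \<Rightarrow> complex \<Rightarrow> complex \<Rightarrow> complex \<Rightarrow> real \<Rightarrow> beam_state" where
  "beam_profile v1 k L1 L2 A B x =
    (A * z2 L1 L2 x + B * z4 L1 L2 x,
     A * z1 L1 L2 x + B * z3 L1 L2 x,
     A * ((k - v1) * z1 L1 L2 x - L1\<^sup>2 * L2\<^sup>2 * z3 L1 L2 x) + B * ((k - v1) * z3 L1 L2 x + z6 L1 L2 x),
     - (A * (v1 * z2 L1 L2 x + L1\<^sup>2 * L2\<^sup>2 * z4 L1 L2 x) + B * (v1 * z4 L1 L2 x - z5 L1 L2 x)))"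

lemma bounded_linear_beam_field: "bounded_linear (beam_field v1 c k)"
proof -
  have "beam_field v1 c k = (\<lambda>Y. (fst (snd Y), snd (snd (snd Y)) + v1 * fst Y,
      c * snd (snd (snd Y)), fst (snd (snd Y)) - k * fst (snd Y)))"
    by (auto simp: beam_field_def)
  then show ?thesis
    by (simp only:)
      (intro bounded_linear_intros bounded_linear_Pair bounded_linear_fst_comp
        bounded_linear_snd_comp bounded_linear_ident)
qed

lemma beam_profile_at_0:
  "beam_profile v1 k L1 L2 A B 0 =
     (0, A * (L1\<^sup>2 - L2\<^sup>2), (A * (k - v1) + B) * (L1\<^sup>2 - L2\<^sup>2), 0)"
  by (simp add: beam_profile_def z_at_0 algebra_simps)

lemma has_vector_derivative_beam_profile:
  assumes L: "L1 \<noteq> 0" "L2 \<noteq> 0"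
    and L_sum: "L1\<^sup>2 + L2\<^sup>2 = v1 + c - k" and L_prod: "L1\<^sup>2 * L2\<^sup>2 = c * v1"
  shows "((\<lambda>x. beam_profile v1 k L1 L2 A B (x - x0)) has_vector_derivative
           beam_field v1 c k (beam_profile v1 k L1 L2 A B (x - x0))) (at x within S)"
proof -
  note z_derivs = has_vector_derivative_z1[OF L] has_vector_derivative_z2[OF L]
    has_vector_derivative_z3 has_vector_derivative_z4[OF L]
    has_vector_derivative_z5 has_vector_derivative_z6[OF L]
  show ?thesis
    unfolding beam_profile_def beam_field_def
    by (rule has_vector_derivative_eq_rhs,
        (rule has_vector_derivative_Pair has_vector_derivative_add has_vector_derivative_diff
          has_vector_derivative_mult_right has_vector_derivative_minus z_derivs)+)
       (simp add: z5_eq_z2_z4[OF L] L_sum L_prod algebra_simps)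
qed

lemma beam_solution_eq_profile:
  fixes Y :: "real \<Rightarrow> beam_state"
  assumes L: "L1 \<noteq> 0" "L2 \<noteq> 0" "L1\<^sup>2 \<noteq> L2\<^sup>2"
    and L_sum: "L1\<^sup>2 + L2\<^sup>2 = v1 + c - k" and L_prod: "L1\<^sup>2 * L2\<^sup>2 = c * v1"
    and cont: "continuous_on {a..b} Y"
    and deriv: "\<And>t. t \<in> {a<..<b} \<Longrightarrow> (Y has_vector_derivative beam_field v1 c k (Y t)) (at t)"
    and x0: "x0 = a \<or> x0 = b"
    and bc: "fst (Y x0) = 0" "snd (snd (snd (Y x0))) = 0"
  obtains A B where "\<And>x. x \<in> {a..b} \<Longrightarrow> Y x = beam_profile v1 k L1 L2 A B (x - x0)"
proof -
  obtain w1 q where Y0: "Y x0 = (0, w1, q, 0)"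
    using bc by (metis prod.collapse)
  define D where "D = L1\<^sup>2 - L2\<^sup>2"
  have "D \<noteq> 0" using L(3) by (simp add: D_def)
  define A where "A = w1 / D"
  define B where "B = q / D - A * (k - v1)"
  let ?Z = "\<lambda>x. beam_profile v1 k L1 L2 A B (x - x0)"
  have Z_deriv: "(?Z has_vector_derivative beam_field v1 c k (?Z t)) (at t within S)" for t S
    by (rule has_vector_derivative_beam_profile[OF L(1,2) L_sum L_prod])
  have "Y x - ?Z x = 0" if x: "x \<in> {a..b}" for x
  proof (rule linear_ode_vanishes_if_vanishes_at_endpoint[OF bounded_linear_beam_field _ _ _ x])
    show "continuous_on {a..b} (\<lambda>x. Y x - ?Z x)"
      by (intro continuous_intros cont continuous_on_vector_derivative[OF Z_deriv])
    show "((\<lambda>x. Y x - ?Z x) has_vector_derivative beam_field v1 c k (Y t - ?Z t)) (at t)"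
      if "t \<in> {a<..<b}" for t
      using has_vector_derivative_diff[OF deriv[OF that] Z_deriv]
      by (simp add: linear_diff[OF bounded_linear.linear[OF bounded_linear_beam_field]])
    have "?Z x0 = Y x0"
      using \<open>D \<noteq> 0\<close> by (simp add: beam_profile_at_0 Y0 A_def B_def D_def[symmetric] field_simps)
    then show "Y a - ?Z a = 0 \<or> Y b - ?Z b = 0"
      using x0 by auto
  qed
  then show thesis
    by (intro that[of A B]) simp
qed

lemma lam1_lam2_sum:
  "(lam1 rho Irho EI K s)\<^sup>2 + (lam2 rho Irho EI K s)\<^sup>2 = 2 * a_coef rho Irho EI K s"
  by (simp add: lam1_def lam2_def)

lemma lam1_lam2_prod:
  "(lam1 rho Irho EI K s)\<^sup>2 * (lam2 rho Irho EI K s)\<^sup>2 = b_coef rho Irho EI K s"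
proof -
  define r where "r = csqrt ((a_coef rho Irho EI K s)\<^sup>2 - b_coef rho Irho EI K s)"
  have "(lam1 rho Irho EI K s)\<^sup>2 * (lam2 rho Irho EI K s)\<^sup>2 = (a_coef rho Irho EI K s)\<^sup>2 - r\<^sup>2"
    unfolding lam1_def lam2_def power2_csqrt r_def[symmetric] by (simp add: power2_eq_square algebra_simps)
  then show ?thesis
    by (simp add: r_def)
qed

lemma lam1_lam2_sq_eq_iff:
  "(lam1 rho Irho EI K s)\<^sup>2 = (lam2 rho Irho EI K s)\<^sup>2 \<longleftrightarrow>
     (a_coef rho Irho EI K s)\<^sup>2 = b_coef rho Irho EI K s"
  by (simp add: lam1_def lam2_def)

lemma timoshenko_segment_solution:
  fixes W W1 W2 P P1 P2 :: "real \<Rightarrow> complex" and rho Irho EI K a b x0 :: real and s :: complex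
  defines "L1 \<equiv> lam1 rho Irho EI K s" and "L2 \<equiv> lam2 rho Irho EI K s"
    and "v1 \<equiv> of_real rho * s\<^sup>2 / of_real K" and "k \<equiv> of_real (K / EI)"
    and "c \<equiv> (of_real K + of_real Irho * s\<^sup>2) / of_real EI"
  assumes K: "K \<noteq> 0" "EI \<noteq> 0"
    and s_b: "b_coef rho Irho EI K s \<noteq> 0"
    and s_ab: "(a_coef rho Irho EI K s)\<^sup>2 \<noteq> b_coef rho Irho EI K s"
    and dW: "\<And>x. x \<in> {a..b} \<Longrightarrow> (W has_vector_derivative W1 x) (at x within {a..b})"
    and dW1: "\<And>x. x \<in> {a..b} \<Longrightarrow> (W1 has_vector_derivative W2 x) (at x within {a..b})"
    and dP: "\<And>x. x \<in> {a..b} \<Longrightarrow> (P has_vector_derivative P1 x) (at x within {a..b})"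
    and dP1: "\<And>x. x \<in> {a..b} \<Longrightarrow> (P1 has_vector_derivative P2 x) (at x within {a..b})"
    and ode1: "\<And>x. x \<in> {a<..<b} \<Longrightarrow>
        of_real K * (W2 x - P1 x) - of_real rho * s\<^sup>2 * W x = 0"
    and ode2: "\<And>x. x \<in> {a<..<b} \<Longrightarrow>
        of_real EI * P2 x + of_real K * (W1 x - P x) - of_real Irho * s\<^sup>2 * P x = 0"
    and x0: "x0 = a \<or> x0 = b"
    and bc: "W x0 = 0" "P1 x0 = 0"
  obtains A B where
    "\<And>x. x \<in> {a..b} \<Longrightarrow> (W x, W1 x, c * P x, P1 x) = beam_profile v1 k L1 L2 A B (x - x0)"
proof (rule beam_solution_eq_profile)
  have "L1\<^sup>2 * L2\<^sup>2 \<noteq> 0"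
    using s_b by (simp add: L1_def L2_def lam1_lam2_prod)
  then show "L1 \<noteq> 0" "L2 \<noteq> 0" by auto
  show "L1\<^sup>2 \<noteq> L2\<^sup>2"
    using s_ab by (simp add: L1_def L2_def lam1_lam2_sq_eq_iff)
  show "L1\<^sup>2 + L2\<^sup>2 = v1 + c - k"
    using K by (simp add: L1_def L2_def v1_def c_def k_def lam1_lam2_sum a_coef_def field_simps)
  show "L1\<^sup>2 * L2\<^sup>2 = c * v1"
    using K by (simp add: L1_def L2_def v1_def c_def lam1_lam2_prod b_coef_def field_simps)
  show "continuous_on {a..b} (\<lambda>x. (W x, W1 x, c * P x, P1 x))"
    by (intro continuous_intros continuous_on_vector_derivative[OF dW] continuous_on_vector_derivative[OF dW1]
        continuous_on_vector_derivative[OF dP] continuous_on_vector_derivative[OF dP1])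
  fix t assume t: "t \<in> {a<..<b}"
  then have at_t: "at t within {a..b} = at t" by (simp add: at_within_Icc_at)
  have "W2 t - (P1 t + v1 * W t) = (of_real K * (W2 t - P1 t) - of_real rho * s\<^sup>2 * W t) / of_real K"
    using K by (simp add: v1_def field_simps)
  moreover have "P2 t - (c * P t - k * W1 t) =
      (of_real EI * P2 t + of_real K * (W1 t - P t) - of_real Irho * s\<^sup>2 * P t) / of_real EI"
    using K by (simp add: c_def k_def field_simps)
  ultimately have "W2 t = P1 t + v1 * W t" "P2 t = c * P t - k * W1 t"
    using ode1[OF t] ode2[OF t] by simp_all
  moreover have "((\<lambda>x. (W x, W1 x, c * P x, P1 x)) has_vector_derivative
      (W1 t, W2 t, c * P1 t, P2 t)) (at t)"
    using t dW dW1 dP dP1 unfolding at_t[symmetric]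
    by (intro has_vector_derivative_Pair has_vector_derivative_mult_right) auto
  ultimately show "((\<lambda>x. (W x, W1 x, c * P x, P1 x)) has_vector_derivative
      beam_field v1 c k (W t, W1 t, c * P t, P1 t)) (at t)"
    by (simp add: beam_field_def)
qed (use x0 bc in auto)

lemma matrix_inv_mult_vector:
  fixes M :: "'a::field^'n^'n"
  assumes "invertible M" and "M *v x = y"
  shows "x = matrix_inv M *v y"
proof -
  have "matrix_inv M ** M = mat 1"
    using assms(1) unfolding invertible_def matrix_inv_def by (rule someI2_ex) auto
  then show ?thesis
    using assms(2) by (metis matrix_vector_mul_assoc matrix_vector_mul_lid)
qed

lemma matrix_vector_mult_last_column:
  fixes M :: "'a::comm_ring_1^4^'n"
  shows "(M *v vector [0, 0, 0, u]) $ i = M $ i $ 4 * u"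
  by (simp add: matrix_vector_mult_def sum_4 vector4_nth)

lemma Mmat_mult_coefficients:
  fixes rho Irho EI K m kappa d l l0 :: real and s A1 B1 A3 B3 :: complex
  defines "L1 \<equiv> lam1 rho Irho EI K s" and "L2 \<equiv> lam2 rho Irho EI K s"
    and "v1 \<equiv> of_real rho * s\<^sup>2 / of_real K" and "k \<equiv> of_real (K / EI)"
  assumes K: "K \<noteq> 0"
    and left: "(w, w1, q, p) = beam_profile v1 k L1 L2 A1 B1 l0"
    and right: "(w', w1', q', p') = beam_profile v1 k L1 L2 A3 B3 (l0 - l)"
  shows "Mmat rho Irho EI K m kappa d l l0 s *v
           vector [of_real K * A1, of_real K * B1, of_real K * A3, of_real K * B3] =
         vector [of_real K * (w - w'), of_real K * (q - q'), of_real K * (p' - p),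
           of_real K * (w1 - w1') + (of_real m * s\<^sup>2 + of_real d * s + of_real kappa) * w]"
  using left right K
  unfolding Mmat_def Let_def beam_profile_def L1_def L2_def v1_def k_def prod.inject
  by (elim conjE, simp only:)
     (simp add: vec_eq_iff forall_4 matrix_vector_mult_def sum_4 vector4_nth field_simps)

lemma interface_coefficients:
  fixes rho Irho EI K m kappa d l l0 :: real and s A1 B1 A3 B3 :: complex
  defines "L1 \<equiv> lam1 rho Irho EI K s" and "L2 \<equiv> lam2 rho Irho EI K s"
    and "v1 \<equiv> of_real rho * s\<^sup>2 / of_real K" and "k \<equiv> of_real (K / EI)"
    and "Mi \<equiv> matrix_inv (Mmat rho Irho EI K m kappa d l l0 s)"
  assumes K: "K \<noteq> 0"
    and M_inv: "invertible (Mmat rho Irho EI K m kappa d l l0 s)"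
    and left: "(w, w1l, q, p) = beam_profile v1 k L1 L2 A1 B1 l0"
    and right: "(w, w1r, q, p) = beam_profile v1 k L1 L2 A3 B3 (l0 - l)"
    and force: "of_real K * (w1l - w1r) + (of_real m * s\<^sup>2 + of_real kappa + of_real d * s) * w = U"
  shows "of_real K * A1 = Mi $ 1 $ 4 * U" and "of_real K * B1 = Mi $ 2 $ 4 * U"
    and "of_real K * A3 = Mi $ 3 $ 4 * U" and "of_real K * B3 = Mi $ 4 $ 4 * U"
proof -
  have "Mmat rho Irho EI K m kappa d l l0 s *v
      vector [of_real K * A1, of_real K * B1, of_real K * A3, of_real K * B3] = vector [0, 0, 0, U]"
    using Mmat_mult_coefficients[OF K left[unfolded L1_def L2_def v1_def k_def]
        right[unfolded L1_def L2_def v1_def k_def]] force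
    by (simp add: ac_simps)
  then have "vector [of_real K * A1, of_real K * B1, of_real K * A3, of_real K * B3] =
      Mi *v vector [0, 0, 0, U]"
    unfolding Mi_def by (rule matrix_inv_mult_vector[OF M_inv])
  then show "of_real K * A1 = Mi $ 1 $ 4 * U" and "of_real K * B1 = Mi $ 2 $ 4 * U"
    and "of_real K * A3 = Mi $ 3 $ 4 * U" and "of_real K * B3 = Mi $ 4 $ 4 * U"
    by (simp_all add: vec_eq_iff forall_4 vector4_nth matrix_vector_mult_last_column)
qed

lemma beam_profile_transfer:
  fixes rho K :: real
  assumes K: "K \<noteq> 0"
    and coeffs: "of_real K * A = C1 * U" "of_real K * B = C2 * U"
    and profile: "(w, w1, q, p) = beam_profile (of_real rho * s\<^sup>2 / of_real K) k L1 L2 A B x"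
  shows "w = (z2 L1 L2 x * C1 + z4 L1 L2 x * C2) / of_real K * U"
    and "p = ((- (L1\<^sup>2 * L2\<^sup>2) * of_real K * z4 L1 L2 x - of_real rho * s\<^sup>2 * z2 L1 L2 x) * C1
            + (of_real K * z5 L1 L2 x - of_real rho * s\<^sup>2 * z4 L1 L2 x) * C2) / (of_real K)\<^sup>2 * U"
proof -
  have A: "A = C1 * U / of_real K" and B: "B = C2 * U / of_real K"
    using coeffs K by (simp_all add: field_simps)
  have w: "w = A * z2 L1 L2 x + B * z4 L1 L2 x"
    and p: "p = - (A * (of_real rho * s\<^sup>2 / of_real K * z2 L1 L2 x + L1\<^sup>2 * L2\<^sup>2 * z4 L1 L2 x)
               + B * (of_real rho * s\<^sup>2 / of_real K * z4 L1 L2 x - z5 L1 L2 x))"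
    using profile by (simp_all add: beam_profile_def)
  show "w = (z2 L1 L2 x * C1 + z4 L1 L2 x * C2) / of_real K * U"
    unfolding w A B by (simp add: add_divide_distrib algebra_simps)
  show "p = ((- (L1\<^sup>2 * L2\<^sup>2) * of_real K * z4 L1 L2 x - of_real rho * s\<^sup>2 * z2 L1 L2 x) * C1
            + (of_real K * z5 L1 L2 x - of_real rho * s\<^sup>2 * z4 L1 L2 x) * C2) / (of_real K)\<^sup>2 * U"
    unfolding p A B using K by (simp add: field_simps power2_eq_square)
qed

theorem proposition1:
  fixes l l0 rho Irho EI K m kappa d :: real
    and s U :: complex
    and W Psi :: "real \<Rightarrow> complex"
    and W1l W2l P1l P2l W1r W2r P1r P2r :: "real \<Rightarrow> complex"
  assumes l0: "0 < l0" "l0 < l"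
    and pos: "rho > 0" "Irho > 0" "EI > 0" "K > 0" "m > 0" "kappa > 0" "d > 0"
    and s_K: "of_real K + of_real Irho * s\<^sup>2 \<noteq> 0"
    and s_b: "b_coef rho Irho EI K s \<noteq> 0"
    and s_ab: "(a_coef rho Irho EI K s)\<^sup>2 \<noteq> b_coef rho Irho EI K s"
    and M_inv: "invertible (Mmat rho Irho EI K m kappa d l l0 s)"
    \<comment> \<open>restriction to [0,l0] is C^2 (one-sided derivatives at the endpoints)\<close>
    and W_l: "\<And>x. x \<in> {0..l0} \<Longrightarrow> (W has_vector_derivative W1l x) (at x within {0..l0})"
    and W'_l: "\<And>x. x \<in> {0..l0} \<Longrightarrow> (W1l has_vector_derivative W2l x) (at x within {0..l0})"
    and W''_l: "continuous_on {0..l0} W2l"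
    and P_l: "\<And>x. x \<in> {0..l0} \<Longrightarrow> (Psi has_vector_derivative P1l x) (at x within {0..l0})"
    and P'_l: "\<And>x. x \<in> {0..l0} \<Longrightarrow> (P1l has_vector_derivative P2l x) (at x within {0..l0})"
    and P''_l: "continuous_on {0..l0} P2l"
    \<comment> \<open>restriction to [l0,l] is C^2 (one-sided derivatives at the endpoints)\<close>
    and W_r: "\<And>x. x \<in> {l0..l} \<Longrightarrow> (W has_vector_derivative W1r x) (at x within {l0..l})"
    and W'_r: "\<And>x. x \<in> {l0..l} \<Longrightarrow> (W1r has_vector_derivative W2r x) (at x within {l0..l})"
    and W''_r: "continuous_on {l0..l} W2r"
    and P_r: "\<And>x. x \<in> {l0..l} \<Longrightarrow> (Psi has_vector_derivative P1r x) (at x within {l0..l})"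
    and P'_r: "\<And>x. x \<in> {l0..l} \<Longrightarrow> (P1r has_vector_derivative P2r x) (at x within {l0..l})"
    and P''_r: "continuous_on {l0..l} P2r"
    \<comment> \<open>the ODE system on (0,l0) and on (l0,l)\<close>
    and ode1_l: "\<And>x. x \<in> {0<..<l0} \<Longrightarrow>
        of_real K * (W2l x - P1l x) - of_real rho * s\<^sup>2 * W x = 0"
    and ode2_l: "\<And>x. x \<in> {0<..<l0} \<Longrightarrow>
        of_real EI * P2l x + of_real K * (W1l x - Psi x) - of_real Irho * s\<^sup>2 * Psi x = 0"
    and ode1_r: "\<And>x. x \<in> {l0<..<l} \<Longrightarrow>
        of_real K * (W2r x - P1r x) - of_real rho * s\<^sup>2 * W x = 0"
    and ode2_r: "\<And>x. x \<in> {l0<..<l} \<Longrightarrow>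
        of_real EI * P2r x + of_real K * (W1r x - Psi x) - of_real Irho * s\<^sup>2 * Psi x = 0"
    \<comment> \<open>boundary conditions\<close>
    and bc: "W 0 = 0" "W l = 0" "P1l 0 = 0" "P1r l = 0"
    \<comment> \<open>interface conditions (continuity of W and Psi is automatic: single functions)\<close>
    and ifc_P': "P1l l0 = P1r l0"
    and ifc_F: "of_real K * (W1l l0 - W1r l0)
                + (of_real m * s\<^sup>2 + of_real kappa + of_real d * s) * W l0 = U"
  shows "\<forall>lk \<in> {0..l}.
           W lk = H1 rho Irho EI K m kappa d l l0 lk s * U \<and>
           (if lk \<le> l0 then P1l lk else P1r lk) = H2 rho Irho EI K m kappa d l l0 lk s * U"
proof -
  let ?L1 = "lam1 rho Irho EI K s" and ?L2 = "lam2 rho Irho EI K s"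
    and ?v1 = "of_real rho * s\<^sup>2 / of_real K" and ?k = "of_real (K / EI)"
    and ?c = "(of_real K + of_real Irho * s\<^sup>2) / of_real EI"
  have K: "K \<noteq> 0" "EI \<noteq> 0" using pos by auto
  obtain A1 B1 where left: "\<And>x. x \<in> {0..l0} \<Longrightarrow>
      (W x, W1l x, ?c * Psi x, P1l x) = beam_profile ?v1 ?k ?L1 ?L2 A1 B1 x"
    using timoshenko_segment_solution[OF K s_b s_ab W_l W'_l P_l P'_l ode1_l ode2_l _ bc(1,3)]
    by auto
  obtain A3 B3 where right: "\<And>x. x \<in> {l0..l} \<Longrightarrow>
      (W x, W1r x, ?c * Psi x, P1r x) = beam_profile ?v1 ?k ?L1 ?L2 A3 B3 (x - l)"
    using timoshenko_segment_solution[OF K s_b s_ab W_r W'_r P_r P'_r ode1_r ode2_r _ bc(2,4)]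
    by auto
  have "(W l0, W1l l0, ?c * Psi l0, P1l l0) = beam_profile ?v1 ?k ?L1 ?L2 A1 B1 l0"
    and "(W l0, W1r l0, ?c * Psi l0, P1l l0) = beam_profile ?v1 ?k ?L1 ?L2 A3 B3 (l0 - l)"
    using left[of l0] right[of l0] l0 ifc_P' by auto
  note coeffs = interface_coefficients[OF K(1) M_inv this ifc_F]
  show ?thesis
  proof
    fix lk assume lk: "lk \<in> {0..l}"
    show "W lk = H1 rho Irho EI K m kappa d l l0 lk s * U \<and>
          (if lk \<le> l0 then P1l lk else P1r lk) = H2 rho Irho EI K m kappa d l l0 lk s * U"
    proof (cases "lk \<le> l0")
      case True
      with beam_profile_transfer[OF K(1) coeffs(1,2) left] lk show ?thesis
        by (simp add: H1_def H2_def Let_def)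
    next
      case False
      with beam_profile_transfer[OF K(1) coeffs(3,4) right] lk show ?thesis
        by (simp add: H1_def H2_def Let_def)
    qed
  qed
qed

end
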